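(* Let $f,g:\mathbb{R}^n\to[0,+\infty)$ and $h_1,h_2:\mathbb{R}^n\to\mathbb{R}$, let $C\subseteq\mathbb{R}^n$ be closed and convex, $\Omega:=\{x:g(x)\neq0\}$, $C\cap\Omega\neq\emptyset$, and assume: $f$ is convex; $g$ is differentiable with locally Lipschitz gradient; $h_1$ is differentiable with locally Lipschitz gradient; $h_2$ is convex. Define $F:\mathbb{R}^n\to(-\infty,+\infty]$ by $F(x)=f^2(x)/g(x)+h_1(x)-h_2(x)$ if $x\in\Omega\cap C$ and $F(x)=+\infty$ otherwise. Suppose $S:=\{x\in\mathbb{R}^n:f(x)=g(x)=0\}\neq\emptyset$. If $x^0\in\mathrm{dom}F$ satisfies $$F(x^0)<\inf\Big\{\liminf_{z\to x}F(z):x\in S\Big\},$$ then the level set $\mathcal{X}_0:=\{x\in\mathrm{dom}F:F(x)\le F(x^0)\}$ is closed.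
   Context: $\mathrm{dom}F=\{x:F(x)<+\infty\}=\Omega\cap C$. *)

theory Defs
  imports "HOL-Analysis.Analysis"
begin

definition loc_lipschitz :: "('a::metric_space \<Rightarrow> 'b::metric_space) \<Rightarrow> bool" where
  "loc_lipschitz G \<longleftrightarrow>
     (\<forall>x. \<exists>e>0. \<exists>L. \<forall>y\<in>ball x e. \<forall>z\<in>ball x e. dist (G y) (G z) \<le> L * dist y z)"

definition diff_loc_lip_grad :: "('a::euclidean_space \<Rightarrow> real) \<Rightarrow> bool" where
  "diff_loc_lip_grad g \<longleftrightarrow>
     (\<exists>G. (\<forall>x. (g has_derivative (\<lambda>v. G x \<bullet> v)) (at x)) \<and> loc_lipschitz G)"

definition Ffun :: "('a \<Rightarrow> real) \<Rightarrow> ('a \<Rightarrow> real) \<Rightarrow> ('a \<Rightarrow> real) \<Rightarrow> ('a \<Rightarrow> real)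
                    \<Rightarrow> 'a set \<Rightarrow> 'a \<Rightarrow> ereal" where
  "Ffun f g h1 h2 C x =
     (if x \<in> {y. g y \<noteq> 0} \<inter> C then ereal ((f x)\<^sup>2 / g x + h1 x - h2 x) else \<infinity>)"

end

theory Submission
  imports Defs
begin

text \<open>On \<open>dom F\<close> the inequality \<open>F x \<le> c\<close> is equivalent to \<open>f\<^sup>2 \<le> g (c - h\<^sub>1 + h\<^sub>2)\<close>, a closed
  condition because \<open>f, g, h\<^sub>1, h\<^sub>2\<close> are continuous (convex or differentiable on \<open>\<real>\<^sup>n\<close>).
  So a limit point of the level set either has \<open>g \<noteq> 0\<close>, and then lies in the level set, or
  has \<open>g = 0\<close>, and then also \<open>f = 0\<close>, i.e.\ it lies in \<open>S\<close>. The liminf hypothesis says that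
  near every point of \<open>S\<close> the values of \<open>F\<close> eventually exceed \<open>F x\<^sup>0\<close>, so no point of \<open>S\<close>
  is a limit point of the level set.\<close>

lemma diff_loc_lip_grad_imp_continuous:
  "diff_loc_lip_grad g \<Longrightarrow> continuous_on UNIV g"
  unfolding diff_loc_lip_grad_def
  by (metis has_derivative_continuous continuous_at_imp_continuous_on)

lemma less_Liminf_at_imp_not_islimpt_sublevel:
  fixes F :: "'a::topological_space \<Rightarrow> 'b::complete_linorder"
  assumes "t < Liminf (at x) F"
  shows "\<not> x islimpt {z. F z \<le> t}"
proof -
  have "eventually (\<lambda>z. t < F z) (at x)"
    using assms le_Liminf_iff by blast
  then show ?thesis
    by (auto simp: islimpt_iff_eventually not_le elim: eventually_mono)
qed

lemma closure_quotient_sublevel_subset: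
  fixes f g h :: "'a::topological_space \<Rightarrow> real" and c :: real
  assumes "continuous_on UNIV f" "continuous_on UNIV g" "continuous_on UNIV h"
    and g_nonneg: "\<And>x. g x \<ge> 0" and "closed C"
  defines "L \<equiv> {x \<in> C. g x \<noteq> 0 \<and> (f x)\<^sup>2 / g x + h x \<le> c}"
  shows "closure L \<subseteq> L \<union> {x. f x = 0 \<and> g x = 0}"
proof -
  have pos_iff: "g x \<noteq> 0 \<longleftrightarrow> g x > 0" for x
    using g_nonneg[of x] by linarith
  have "L \<subseteq> C \<inter> {x. (f x)\<^sup>2 \<le> g x * (c - h x)}"
    by (auto simp: L_def pos_iff field_simps)
  moreover have "closed (C \<inter> {x. (f x)\<^sup>2 \<le> g x * (c - h x)})"
    using assms by (intro closed_Int closed_Collect_le continuous_intros) auto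
  ultimately have closure_L: "closure L \<subseteq> C \<inter> {x. (f x)\<^sup>2 \<le> g x * (c - h x)}"
    by (rule closure_minimal)
  show ?thesis
  proof
    fix x assume "x \<in> closure L"
    with closure_L have "x \<in> C" and le: "(f x)\<^sup>2 \<le> g x * (c - h x)"
      by auto
    show "x \<in> L \<union> {x. f x = 0 \<and> g x = 0}"
    proof (cases "g x = 0")
      case True
      with le show ?thesis by simp
    next
      case False
      with le \<open>x \<in> C\<close> show ?thesis
        by (auto simp: L_def pos_iff field_simps)
    qed
  qed
qed

lemma Ffun_sublevel_eq:
  "{x. Ffun f g h1 h2 C x < \<infinity> \<and> Ffun f g h1 h2 C x \<le> ereal c}
     = {x \<in> C. g x \<noteq> 0 \<and> (f x)\<^sup>2 / g x + (h1 x - h2 x) \<le> c}"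
  by (auto simp: Ffun_def)

theorem proposition4p1:
  fixes f g h1 h2 :: "'a::euclidean_space \<Rightarrow> real" and C :: "'a set" and x0 :: 'a
  assumes f_nonneg: "\<And>x. f x \<ge> 0" and g_nonneg: "\<And>x. g x \<ge> 0"
    and C_closed: "closed C" and C_convex: "convex C"
    and C_Omega: "C \<inter> {x. g x \<noteq> 0} \<noteq> {}"
    and f_convex: "convex_on UNIV f"
    and g_smooth: "diff_loc_lip_grad g"
    and h1_smooth: "diff_loc_lip_grad h1"
    and h2_convex: "convex_on UNIV h2"
    and S_ne: "{x. f x = 0 \<and> g x = 0} \<noteq> {}"
    and x0_dom: "Ffun f g h1 h2 C x0 < \<infinity>"
    and x0_below: "Ffun f g h1 h2 C x0 <
        (INF x\<in>{x. f x = 0 \<and> g x = 0}. Liminf (at x) (Ffun f g h1 h2 C))"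
  shows "closed {x. Ffun f g h1 h2 C x < \<infinity> \<and> Ffun f g h1 h2 C x \<le> Ffun f g h1 h2 C x0}"
proof -
  define F where "F = Ffun f g h1 h2 C"
  define S where "S = {x. f x = 0 \<and> g x = 0}"
  define L where "L = {x. F x < \<infinity> \<and> F x \<le> F x0}"
  obtain c where c: "F x0 = ereal c"
    using x0_dom by (auto simp: F_def Ffun_def split: if_splits)
  have L_eq: "L = {x \<in> C. g x \<noteq> 0 \<and> (f x)\<^sup>2 / g x + (h1 x - h2 x) \<le> c}"
    unfolding L_def c unfolding F_def by (rule Ffun_sublevel_eq)
  have "continuous_on UNIV f" "continuous_on UNIV h2"
    by (auto intro: convex_on_continuous f_convex h2_convex)
  moreover have "continuous_on UNIV g" "continuous_on UNIV h1"
    using g_smooth h1_smooth by (auto intro: diff_loc_lip_grad_imp_continuous)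
  ultimately have "closure L \<subseteq> L \<union> S"
    unfolding L_eq S_def
    by (intro closure_quotient_sublevel_subset continuous_intros g_nonneg C_closed)
  moreover have "x \<notin> closure L" if "x \<in> S" for x
  proof -
    have "F x0 < (INF y\<in>S. Liminf (at y) F)"
      using x0_below by (simp add: F_def S_def)
    also have "\<dots> \<le> Liminf (at x) F"
      using \<open>x \<in> S\<close> by (rule INF_lower)
    finally have "\<not> x islimpt {z. F z \<le> F x0}"
      by (rule less_Liminf_at_imp_not_islimpt_sublevel)
    then have "\<not> x islimpt L"
      by (rule contrapos_nn) (auto simp: L_def elim: islimpt_subset)
    moreover have "x \<notin> L"
      using \<open>x \<in> S\<close> by (simp add: L_def S_def F_def Ffun_def)
    ultimately show ?thesis
      by (simp add: closure_def)
  qed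
  ultimately have "closure L \<subseteq> L"
    by blast
  then show ?thesis
    by (simp add: closure_subset_eq L_def F_def)
qed

end
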